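(* There exists a $4$-colored tiling of $\mathbb{R}^3$ all of whose tiles have volume $1$ and whose minimal distance equals $(12+8\sqrt2)^{-1/3}\approx0.350$.
   Context: A $k$-colored tiling of $\mathbb{R}^3$ is a locally finite collection of closed bounded connected tiles covering $\mathbb{R}^3$, distinct tiles intersecting only in their boundaries, each tile assigned one of $k$ colors. The minimal distance is the infimum of the Euclidean distances $|x-y|$ over $x\in T_i$, $y\in T_j$ with $i\neq j$ and $T_i,T_j$ of the same color. *)

theory Defs
  imports "HOL-Analysis.Analysis"
begin

definition colored_tiling ::
  "nat \<Rightarrow> (real^3) set set \<Rightarrow> ((real^3) set \<Rightarrow> nat) \<Rightarrow> bool" where
  "colored_tiling k Tiles col \<longleftrightarrow>
     (\<forall>T\<in>Tiles. closed T \<and> bounded T \<and> connected T) \<and>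
     (\<forall>x::real^3. \<exists>e>0. finite {T\<in>Tiles. T \<inter> ball x e \<noteq> {}}) \<and>
     \<Union>Tiles = UNIV \<and>
     (\<forall>T\<in>Tiles. \<forall>T'\<in>Tiles. T \<noteq> T' \<longrightarrow> T \<inter> T' \<subseteq> frontier T \<inter> frontier T') \<and>
     (\<forall>T\<in>Tiles. col T < k)"

definition min_distance :: "(real^3) set set \<Rightarrow> ((real^3) set \<Rightarrow> nat) \<Rightarrow> real" where
  "min_distance Tiles col =
     Inf {dist x y | x y T T'. T \<in> Tiles \<and> T' \<in> Tiles \<and> T \<noteq> T' \<and> col T = col T' \<and>
                              x \<in> T \<and> y \<in> T'}"

end

theory Submission
  imports Defs
begin

text \<open>Bricks of size \<open>2c \<times> c \<times> 3s\<close> are laid in sheared stacks: the brick indexed by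
  \<open>(i, j, m)\<close> has its lower corner at the grid point \<open>(2i + j, j, 3m + i + 2j)\<close>, measured in units
  \<open>(c, c, s)\<close>, and is coloured by its height index \<open>3m + i + 2j\<close> modulo 4. If the grid corners
  of two bricks of the same colour differed by at most the brick extents \<open>2, 1, 3\<close> in the three
  coordinates, their height indices would be equal, and then the shears force the indices
  themselves to be equal. So distinct bricks of one colour are separated by a gap of \<open>c\<close> or \<open>s\<close> in
  some coordinate, while the bricks \<open>(0, 0, 0)\<close> and \<open>(1, -2, 1)\<close> are at distance exactly \<open>c\<close>.
  Taking \<open>s = 1 / (6 c\<^sup>2)\<close> gives volume 1, and \<open>c \<le> s\<close> holds for every \<open>c\<close> with \<open>6 c\<^sup>3 \<le> 1\<close>,
  in particular for \<open>c = (12 + 8 sqrt 2) powr (-1/3)\<close>.\<close>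

definition grid_interval :: "real \<Rightarrow> int \<Rightarrow> int \<Rightarrow> real set" where
  "grid_interval s n k = {s * of_int k .. s * of_int (k + n)}"

lemma grid_interval_gap:
  assumes "s > 0" "x \<in> grid_interval s n k" "y \<in> grid_interval s n k'" "n < \<bar>k - k'\<bar>"
  shows "s \<le> \<bar>x - y\<bar>"
proof -
  have "s * of_int (k + n) + s \<le> s * of_int k'" if "k + n < k'" for k k'
  proof -
    have "s * of_int (k + n + 1) \<le> s * of_int k'"
      using that \<open>s > 0\<close> by (intro mult_left_mono) auto
    then show ?thesis by (simp add: algebra_simps)
  qed
  from this[of k k'] this[of k' k] show ?thesis
    using assms unfolding grid_interval_def by (cases "k \<le> k'") auto
qed

lemma grid_interval_interior_overlap:
  assumes "s > 0" "x \<in> interior (grid_interval s n k)" "x \<in> grid_interval s n k'"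
  shows "\<bar>k - k'\<bar> < n"
proof -
  have "s * of_int k < s * of_int (k' + n)" "s * of_int k' < s * of_int (k + n)"
    using assms(2,3) unfolding grid_interval_def interior_atLeastAtMost_real
    by (auto simp: add.commute)
  then have "k < k' + n" "k' < k + n"
    using \<open>s > 0\<close> by (simp_all only: mult_less_cancel_left_pos of_int_less_iff)
  then show ?thesis by linarith
qed

lemma grid_interval_cover:
  assumes "s > 0" "n > 0"
  shows "\<exists>q. x \<in> grid_interval s n (n * q + r)"
proof
  define q where "q = \<lfloor>(x / s - of_int r) / of_int n\<rfloor>"
  have "of_int q \<le> (x / s - of_int r) / of_int n" "(x / s - of_int r) / of_int n < of_int q + 1"
    unfolding q_def by linarith+
  then have "of_int (n * q + r) \<le> x / s" "x / s \<le> of_int (n * q + r + n)"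
    using \<open>n > 0\<close> by (simp_all add: field_simps)
  then show "x \<in> grid_interval s n (n * q + r)"
    using \<open>s > 0\<close> unfolding grid_interval_def by (simp add: field_simps)
qed

lemma finite_grid_intervals_meeting:
  assumes "s > 0"
  shows "finite {k. grid_interval s n k \<inter> {a..b} \<noteq> {}}"
proof -
  have "{k. grid_interval s n k \<inter> {a..b} \<noteq> {}} \<subseteq> {\<lfloor>a / s\<rfloor> - n .. \<lceil>b / s\<rceil>}"
  proof
    fix k assume "k \<in> {k. grid_interval s n k \<inter> {a..b} \<noteq> {}}"
    then obtain y where "y \<in> grid_interval s n k" "y \<in> {a..b}" by blast
    then have "a / s \<le> of_int (k + n)" "of_int k \<le> b / s"
      using \<open>s > 0\<close> unfolding grid_interval_def by (auto simp: field_simps)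
    then have "\<lfloor>a / s\<rfloor> \<le> k + n" "k \<le> \<lceil>b / s\<rceil>"
      using floor_mono ceiling_mono by fastforce+
    then show "k \<in> {\<lfloor>a / s\<rfloor> - n .. \<lceil>b / s\<rceil>}" by simp
  qed
  then show ?thesis by (rule finite_subset) simp
qed

definition grid_corner :: "int \<times> int \<times> int \<Rightarrow> int \<times> int \<times> int" where
  "grid_corner = (\<lambda>(i, j, m). (2 * i + j, j, 3 * m + i + 2 * j))"

lemma inj_grid_corner: "inj grid_corner"
  unfolding grid_corner_def inj_def by auto

lemma grid_corner_close_eq:
  assumes "grid_corner p = (a, b, t)" "grid_corner q = (a', b', t')"
    and "\<bar>a - a'\<bar> < 2" "\<bar>b - b'\<bar> < 1" "\<bar>t - t'\<bar> < 3"
  shows "p = q"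
proof -
  obtain i j m i' j' m' where pq: "p = (i, j, m)" "q = (i', j', m')"
    by (cases p, cases q) auto
  have corners: "a = 2 * i + j" "b = j" "t = 3 * m + i + 2 * j"
    "a' = 2 * i' + j'" "b' = j'" "t' = 3 * m' + i' + 2 * j'"
    using assms(1,2) unfolding pq grid_corner_def by auto
  have "j = j'" using assms(4) corners by linarith
  moreover from this have "i = i'" using assms(3) corners by linarith
  moreover from calculation have "m = m'" using assms(5) corners by linarith
  ultimately show ?thesis unfolding pq by simp
qed

lemma grid_corner_distinct_congruent_far:
  assumes "grid_corner p = (a, b, t)" "grid_corner q = (a', b', t')"
    and "t mod 4 = t' mod 4" "p \<noteq> q"
  shows "2 < \<bar>a - a'\<bar> \<or> 1 < \<bar>b - b'\<bar> \<or> 3 < \<bar>t - t'\<bar>"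
proof (rule ccontr)
  obtain i j m i' j' m' where pq: "p = (i, j, m)" "q = (i', j', m')"
    by (cases p, cases q) auto
  define di dj dm where "di = i - i'" and "dj = j - j'" and "dm = m - m'"
  have diffs: "a - a' = 2 * di + dj" "b - b' = dj" "t - t' = 3 * dm + di + 2 * dj"
    using assms(1,2) unfolding pq grid_corner_def di_def dj_def dm_def by auto
  assume "\<not> ?thesis"
  then have "\<bar>2 * di + dj\<bar> \<le> 2" "\<bar>dj\<bar> \<le> 1" "\<bar>t - t'\<bar> \<le> 3"
    unfolding diffs by auto
  moreover have "t = t'" using assms(3) \<open>\<bar>t - t'\<bar> \<le> 3\<close> by presburger
  ultimately have "3 * dm + di + 2 * dj = 0" "\<bar>2 * di + dj\<bar> \<le> 2" "\<bar>dj\<bar> \<le> 1"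
    using diffs(3) by simp_all
  then have "di = 0 \<and> dj = 0 \<and> dm = 0" by presburger
  with assms(4) show False unfolding pq di_def dj_def dm_def by simp
qed

locale brick_tiling =
  fixes c s :: real
  assumes c_pos: "c > 0" and s_pos: "s > 0"
begin

definition brick :: "int \<times> int \<times> int \<Rightarrow> (real^3) set" where
  "brick p = (case grid_corner p of (a, b, t) \<Rightarrow>
     cbox (vector [c * of_int a, c * of_int b, s * of_int t])
          (vector [c * of_int (a + 2), c * of_int (b + 1), s * of_int (t + 3)]))"

text \<open>On sets that are not bricks, \<open>inv brick\<close> (and hence \<open>colour\<close>) takes an unspecified value.\<close>

definition colour :: "(real^3) set \<Rightarrow> nat" where
  "colour T = (case grid_corner (inv brick T) of (_, _, t) \<Rightarrow> nat (t mod 4))"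

lemma mem_brick:
  assumes "grid_corner p = (a, b, t)"
  shows "x \<in> brick p \<longleftrightarrow>
    x$1 \<in> grid_interval c 2 a \<and> x$2 \<in> grid_interval c 1 b \<and> x$3 \<in> grid_interval s 3 t"
  unfolding brick_def assms grid_interval_def by (simp add: mem_box_cart forall_3)

lemma mem_interior_brick:
  assumes "grid_corner p = (a, b, t)"
  shows "x \<in> interior (brick p) \<longleftrightarrow>
    x$1 \<in> interior (grid_interval c 2 a) \<and> x$2 \<in> interior (grid_interval c 1 b) \<and>
    x$3 \<in> interior (grid_interval s 3 t)"
  unfolding brick_def assms grid_interval_def interior_atLeastAtMost_real
  by (simp add: interior_cbox mem_box_cart forall_3)

lemma brick_interior_unique:
  assumes "x \<in> interior (brick p)" "x \<in> brick q"
  shows "p = q"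
proof -
  obtain a b t a' b' t' where corners: "grid_corner p = (a, b, t)" "grid_corner q = (a', b', t')"
    by (metis prod_cases3)
  show ?thesis
    using assms c_pos s_pos
    unfolding mem_interior_brick[OF corners(1)] mem_brick[OF corners(2)]
    by (intro grid_corner_close_eq[OF corners]) (auto dest: grid_interval_interior_overlap)
qed

lemma interior_brick_nonempty: "interior (brick p) \<noteq> {}"
  unfolding brick_def using c_pos s_pos
  by (simp add: interior_cbox interval_ne_empty_cart forall_3 split: prod.split)

lemma inj_brick: "inj brick"
proof
  fix p q assume "brick p = brick q"
  moreover obtain x where "x \<in> interior (brick p)" using interior_brick_nonempty by blast
  ultimately show "p = q" using brick_interior_unique interior_subset by blast
qed

lemma colour_brick: "grid_corner p = (a, b, t) \<Longrightarrow> colour (brick p) = nat (t mod 4)"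
  unfolding colour_def inv_f_f[OF inj_brick] by simp

lemma compact_brick: "compact (brick p)"
  unfolding brick_def by (simp split: prod.split)

lemma connected_brick: "connected (brick p)"
  unfolding brick_def by (simp add: is_interval_connected split: prod.split)

lemma brick_inter_subset_frontier:
  assumes "p \<noteq> q"
  shows "brick p \<inter> brick q \<subseteq> frontier (brick p) \<inter> frontier (brick q)"
proof -
  have "frontier (brick r) = brick r - interior (brick r)" for r
    using compact_brick by (simp add: frontier_def compact_imp_closed)
  then show ?thesis using brick_interior_unique assms by blast
qed

lemma Union_range_brick: "\<Union> (range brick) = UNIV"
proof -
  have "\<exists>p. x \<in> brick p" for x
  proof -
    obtain j where j: "x$2 \<in> grid_interval c 1 (1 * j + 0)"
      using grid_interval_cover[OF c_pos zero_less_one] by blast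
    obtain i where i: "x$1 \<in> grid_interval c 2 (2 * i + j)"
      using grid_interval_cover[OF c_pos, of 2] by auto
    obtain m where m: "x$3 \<in> grid_interval s 3 (3 * m + (i + 2 * j))"
      using grid_interval_cover[OF s_pos, of 3] by auto
    have "grid_corner (i, j, m) = (2 * i + j, j, 3 * m + i + 2 * j)"
      by (simp add: grid_corner_def)
    with i j m have "x \<in> brick (i, j, m)" by (simp add: mem_brick add.assoc)
    then show ?thesis ..
  qed
  then show ?thesis by blast
qed

lemma brick_locally_finite: "finite {T \<in> range brick. T \<inter> ball x e \<noteq> {}}"
proof -
  define near where "near r n y = {k. grid_interval r n k \<inter> {y - e .. y + e} \<noteq> {}}" for r n y
  have "{T \<in> range brick. T \<inter> ball x e \<noteq> {}} \<subseteq>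
      brick ` (grid_corner -` (near c 2 (x$1) \<times> near c 1 (x$2) \<times> near s 3 (x$3)))"
  proof
    fix T assume "T \<in> {T \<in> range brick. T \<inter> ball x e \<noteq> {}}"
    then obtain p y where T: "T = brick p" and y: "y \<in> brick p" "y \<in> ball x e" by blast
    obtain a b t where corner: "grid_corner p = (a, b, t)" by (metis prod_cases3)
    have "y$k \<in> {x$k - e .. x$k + e}" for k
      using y(2) dist_vec_nth_le[of x k y] by (auto simp: dist_real_def)
    with y(1) have "a \<in> near c 2 (x$1)" "b \<in> near c 1 (x$2)" "t \<in> near s 3 (x$3)"
      unfolding mem_brick[OF corner] near_def by blast+
    then have "grid_corner p \<in> near c 2 (x$1) \<times> near c 1 (x$2) \<times> near s 3 (x$3)"
      by (simp add: corner)
    then show "T \<in> brick ` (grid_corner -` (near c 2 (x$1) \<times> near c 1 (x$2) \<times> near s 3 (x$3)))"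
      unfolding T by blast
  qed
  moreover have "finite (near r n y)" if "r > 0" for r n y
    unfolding near_def using that by (rule finite_grid_intervals_meeting)
  ultimately show ?thesis
    using c_pos s_pos by (auto elim!: finite_subset intro!: finite_imageI finite_vimageI inj_grid_corner)
qed

lemma measure_brick: "measure lebesgue (brick p) = 6 * c^2 * s"
proof -
  obtain a b t where corner: "grid_corner p = (a, b, t)" by (metis prod_cases3)
  define lo hi :: "real^3" where
    "lo = vector [c * of_int a, c * of_int b, s * of_int t]" and
    "hi = vector [c * of_int (a + 2), c * of_int (b + 1), s * of_int (t + 3)]"
  have box: "brick p = cbox lo hi" unfolding brick_def corner lo_def hi_def by simp
  have "brick p \<noteq> {}" using interior_brick_nonempty interior_subset by blast
  have "measure lebesgue (brick p) = Henstock_Kurzweil_Integration.content (cbox lo hi)"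
    unfolding box by simp
  also have "\<dots> = (\<Prod>k\<in>UNIV. hi$k - lo$k)"
    using \<open>brick p \<noteq> {}\<close> unfolding box by (rule content_cbox_cart)
  also have "\<dots> = 2 * c * c * (3 * s)"
    unfolding UNIV_3 lo_def hi_def by (simp add: algebra_simps)
  also have "\<dots> = 6 * c^2 * s" by (simp add: power2_eq_square)
  finally show ?thesis .
qed

lemma dist_bricks_same_colour:
  assumes "x \<in> brick p" "y \<in> brick q" "p \<noteq> q" "colour (brick p) = colour (brick q)"
  shows "min c s \<le> dist x y"
proof -
  obtain a b t a' b' t' where corners: "grid_corner p = (a, b, t)" "grid_corner q = (a', b', t')"
    by (metis prod_cases3)
  have "t mod 4 = t' mod 4"
    using assms(4) unfolding colour_brick[OF corners(1)] colour_brick[OF corners(2)] by simp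
  have component: "\<bar>x$k - y$k\<bar> \<le> dist x y" for k
    using dist_vec_nth_le[of x k y] by (simp add: dist_real_def)
  note x = assms(1)[unfolded mem_brick[OF corners(1)]]
  note y = assms(2)[unfolded mem_brick[OF corners(2)]]
  from grid_corner_distinct_congruent_far[OF corners \<open>t mod 4 = t' mod 4\<close> assms(3)]
  consider "2 < \<bar>a - a'\<bar>" | "1 < \<bar>b - b'\<bar>" | "3 < \<bar>t - t'\<bar>" by blast
  then show ?thesis
  proof cases
    case 1
    then have "c \<le> \<bar>x$1 - y$1\<bar>" using x y c_pos by (intro grid_interval_gap) auto
    then show ?thesis using component[of 1] by linarith
  next
    case 2
    then have "c \<le> \<bar>x$2 - y$2\<bar>" using x y c_pos by (intro grid_interval_gap) auto
    then show ?thesis using component[of 2] by linarith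
  next
    case 3
    then have "s \<le> \<bar>x$3 - y$3\<bar>" using x y s_pos by (intro grid_interval_gap) auto
    then show ?thesis using component[of 3] by linarith
  qed
qed

lemma colored_tiling_bricks: "colored_tiling 4 (range brick) colour"
proof -
  have "\<forall>T\<in>range brick. closed T \<and> bounded T \<and> connected T"
    using compact_brick connected_brick by (auto simp: compact_imp_closed compact_imp_bounded)
  moreover have "\<forall>x. \<exists>e>0. finite {T \<in> range brick. T \<inter> ball x e \<noteq> {}}"
    by (intro allI exI[of _ 1]) (simp add: brick_locally_finite)
  moreover have "\<forall>T\<in>range brick. \<forall>T'\<in>range brick. T \<noteq> T' \<longrightarrow> T \<inter> T' \<subseteq> frontier T \<inter> frontier T'"
  proof (intro ballI impI)
    fix T T' assume "T \<in> range brick" "T' \<in> range brick" "T \<noteq> T'"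
    then obtain p q where "T = brick p" "T' = brick q" "p \<noteq> q" by blast
    then show "T \<inter> T' \<subseteq> frontier T \<inter> frontier T'" using brick_inter_subset_frontier by simp
  qed
  moreover have "\<forall>T\<in>range brick. colour T < 4"
  proof
    fix T assume "T \<in> range brick"
    then obtain p a b t where "T = brick p" and corner: "grid_corner p = (a, b, t)"
      by (metis imageE prod_cases3)
    then show "colour T < 4" using colour_brick[OF corner] by simp
  qed
  ultimately show ?thesis
    unfolding colored_tiling_def using Union_range_brick by (intro conjI) auto
qed

lemma min_distance_bricks:
  assumes "c \<le> s"
  shows "min_distance (range brick) colour = c"
  unfolding min_distance_def
proof (rule cInf_eq_minimum)
  define x y :: "real^3" where "x = vector [0, 0, 0]" and "y = vector [0, - c, 0]"
  have corners: "grid_corner (0, 0, 0) = (0, 0, 0)" "grid_corner (1, -2, 1) = (0, -2, 0)"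
    by (simp_all add: grid_corner_def)
  have "x \<in> brick (0, 0, 0)" "y \<in> brick (1, -2, 1)"
    unfolding mem_brick[OF corners(1)] mem_brick[OF corners(2)] x_def y_def grid_interval_def
    using c_pos s_pos by simp_all
  moreover have "brick (0, 0, 0) \<noteq> brick (1, -2, 1)" using inj_brick by (auto dest: injD)
  moreover have "colour (brick (0, 0, 0)) = colour (brick (1, -2, 1))"
    using colour_brick[OF corners(1)] colour_brick[OF corners(2)] by simp
  moreover have "dist x y = c"
    unfolding x_def y_def dist_vec_def L2_set_def sum_3 using c_pos by simp
  ultimately show "c \<in> {dist x y |x y T T'. T \<in> range brick \<and> T' \<in> range brick \<and> T \<noteq> T' \<and>
      colour T = colour T' \<and> x \<in> T \<and> y \<in> T'}"
    by blast
next
  fix d assume "d \<in> {dist x y |x y T T'. T \<in> range brick \<and> T' \<in> range brick \<and> T \<noteq> T' \<and>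
      colour T = colour T' \<and> x \<in> T \<and> y \<in> T'}"
  then obtain x y p q where "d = dist x y" "brick p \<noteq> brick q"
      "colour (brick p) = colour (brick q)" "x \<in> brick p" "y \<in> brick q"
    by blast
  then show "c \<le> d" using dist_bricks_same_colour[of x p y q] assms by fastforce
qed

end

theorem mainTheorem13:
  shows "\<exists>(Tiles :: (real^3) set set) (col :: (real^3) set \<Rightarrow> nat).
           colored_tiling 4 Tiles col \<and>
           (\<forall>T\<in>Tiles. measure lebesgue T = 1) \<and>
           min_distance Tiles col = (12 + 8 * sqrt 2) powr (-1/3)"
proof -
  define c :: real where "c = (12 + 8 * sqrt 2) powr (-1/3)"
  define s :: real where "s = 1 / (6 * c^2)"
  have base_pos: "(12 + 8 * sqrt 2 :: real) > 0" by (simp add: add_pos_nonneg)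
  then have "c > 0" unfolding c_def by simp
  then interpret brick_tiling c s by unfold_locales (simp_all add: s_def)
  have "c^3 = c powr (real 3)" using \<open>c > 0\<close> by (simp add: powr_realpow)
  also have "\<dots> = (12 + 8 * sqrt 2) powr (-1)" unfolding c_def by (simp add: powr_powr)
  also have "\<dots> = 1 / (12 + 8 * sqrt 2)" using base_pos by (simp add: powr_minus_divide)
  finally have "6 * c^3 \<le> 1" by (simp add: field_simps add_pos_nonneg)
  then have "c \<le> s"
    using \<open>c > 0\<close> unfolding s_def by (simp add: field_simps power3_eq_cube power2_eq_square)
  moreover have "6 * c^2 * s = 1" using \<open>c > 0\<close> unfolding s_def by simp
  ultimately show ?thesis
    unfolding c_def[symmetric] using colored_tiling_bricks measure_brick min_distance_bricks
    by (intro exI[of _ "range brick"] exI[of _ colour]) simp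
qed

end
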